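(* Let $P$ be the uniform distribution on $[0,1]$, let $\beta=\{\frac14,\frac12\}$, and let $V_n$ ($n\geq2$) be the $n$th conditional quantization error of $P$ with respect to $\beta$, with $V_\infty=\lim_{n\to\infty}V_n$. Then the conditional quantization dimension \[D(P)=\lim_{n\to\infty}\frac{2\log n}{-\log(V_n-V_\infty)}\] exists and $D(P)=1$.
   Context: For a Borel probability measure $P$ on $\mathbb{R}$ and a finite set $\beta\subset\mathbb{R}$ with $\mathrm{card}(\beta)=r$, for $n\geq r$ the $n$th conditional quantization error is $V_n=\inf\{\int\min_{a\in\alpha\cup\beta}(x-a)^2\,dP(x):\alpha\subset\mathbb{R},\ \mathrm{card}(\alpha)\leq n-r\}$. *)

theory Defs
  imports "HOL-Probability.Probability"
begin

definition distortion :: "real measure \<Rightarrow> real set \<Rightarrow> real" where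
  "distortion M A = (\<integral>x. Min ((\<lambda>a. (x - a)^2) ` A) \<partial>M)"

text \<open>n-th conditional quantization error of M with respect to the finite set beta
  (meaningful for n \<ge> card beta).\<close>
definition cond_quant_err :: "real measure \<Rightarrow> real set \<Rightarrow> nat \<Rightarrow> real" where
  "cond_quant_err M \<beta> n =
     Inf {distortion M (\<alpha> \<union> \<beta>) | \<alpha>. finite \<alpha> \<and> card \<alpha> \<le> n - card \<beta>}"

end

theory Submission
  imports Defs "HOL-Real_Asymp.Real_Asymp"
begin

text \<open>Any codebook of at most n points leaves at least half of [0,1] at distance at least
  1/(4n) from it, so by Markov's inequality its distortion is at least 1/(32 n^2). Conversely,
  adding to beta the midpoints of the n - card beta equal subintervals of [0,1] gives distortion
  at most 1/(4 (n - card beta)^2). Hence V n has exact order n^-2 for every nonempty finite beta,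
  so V tends to 0 and 2 ln n / (- ln (V n)) tends to 1.\<close>

abbreviation uniform01 :: "real measure" where
  "uniform01 \<equiv> uniform_measure lborel {0..1}"

abbreviation sq_dist_to :: "real set \<Rightarrow> real \<Rightarrow> real" where
  "sq_dist_to A x \<equiv> Min ((\<lambda>a. (x - a)^2) ` A)"

lemma sq_dist_to_nonneg: "finite A \<Longrightarrow> A \<noteq> {} \<Longrightarrow> 0 \<le> sq_dist_to A x"
  by (simp add: Min_ge_iff)

lemma sq_dist_to_le: "finite A \<Longrightarrow> a \<in> A \<Longrightarrow> sq_dist_to A x \<le> (x - a)^2"
  by (intro Min_le) auto

lemma sq_dist_to_less_iff:
  assumes "finite A" "A \<noteq> {}" "0 < r"
  shows "sq_dist_to A x < r^2 \<longleftrightarrow> (\<exists>a\<in>A. \<bar>x - a\<bar> < r)"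
proof -
  have "(x - a)^2 < r^2 \<longleftrightarrow> \<bar>x - a\<bar> < r" for a
    using \<open>0 < r\<close> abs_le_square_iff[of r "x - a"] by auto
  then show ?thesis using assms by (simp add: Min_less_iff)
qed

lemma distortion_nonneg: "finite A \<Longrightarrow> A \<noteq> {} \<Longrightarrow> 0 \<le> distortion M A"
  unfolding distortion_def by (intro integral_nonneg_AE AE_I2 sq_dist_to_nonneg)

lemma cond_quant_err_le_distortion:
  assumes "finite \<beta>" "\<beta> \<noteq> {}" "finite \<alpha>" "card \<alpha> \<le> n - card \<beta>"
  shows "cond_quant_err M \<beta> n \<le> distortion M (\<alpha> \<union> \<beta>)"
  unfolding cond_quant_err_def
proof (rule cInf_lower)
  show "bdd_below {distortion M (\<alpha> \<union> \<beta>) |\<alpha>. finite \<alpha> \<and> card \<alpha> \<le> n - card \<beta>}"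
    using assms by (intro bdd_belowI[of _ 0]) (auto intro: distortion_nonneg)
qed (use assms in blast)

lemma le_cond_quant_err:
  assumes "\<And>\<alpha>. finite \<alpha> \<Longrightarrow> card \<alpha> \<le> n - card \<beta> \<Longrightarrow> c \<le> distortion M (\<alpha> \<union> \<beta>)"
  shows "c \<le> cond_quant_err M \<beta> n"
  unfolding cond_quant_err_def
  by (rule cInf_greatest) (use assms in \<open>auto intro: exI[of _ "{}"]\<close>)

lemma prob_space_uniform01: "prob_space uniform01"
  by (rule prob_space_uniform_measure) auto

lemma integrable_sq_dist_to_uniform01:
  assumes "finite A" "A \<noteq> {}"
  shows "integrable uniform01 (\<lambda>x. sq_dist_to A x)"
proof -
  interpret prob_space uniform01 by (rule prob_space_uniform01)
  obtain a where a: "a \<in> A" using assms by blast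
  show ?thesis
  proof (rule Bochner_Integration.integrable_bound[OF integrable_const[of "(1 + \<bar>a\<bar>)^2"]])
    show "(\<lambda>x. sq_dist_to A x) \<in> borel_measurable uniform01"
      using assms by measurable
    have "sq_dist_to A x \<le> (1 + \<bar>a\<bar>)^2" if "x \<in> {0..1}" for x
    proof -
      have "sq_dist_to A x \<le> (x - a)^2" using assms(1) a by (rule sq_dist_to_le)
      also have "\<dots> \<le> (1 + \<bar>a\<bar>)^2"
        using that by (auto simp flip: abs_le_square_iff)
      finally show ?thesis .
    qed
    then show "AE x in uniform01. norm (sq_dist_to A x) \<le> norm ((1 + \<bar>a\<bar>)^2 :: real)"
      using assms by (subst AE_uniform_measure) (auto intro!: AE_I2 simp: sq_dist_to_nonneg)
  qed
qed

lemma measure_uniform01_interval_le: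
  assumes "0 < r"
  shows "measure uniform01 {a - r<..<a + r} \<le> 2 * r"
proof -
  have "measure uniform01 {a - r<..<a + r} = measure lborel ({0..1} \<inter> {a - r<..<a + r})"
    by (subst measure_uniform_measure) auto
  also have "\<dots> \<le> measure lborel {a - r<..<a + r}"
    using fmeasurable_box[of "a - r" "a + r"] unfolding box_real
    by (intro measure_mono_fmeasurable) auto
  finally show ?thesis using assms by simp
qed

lemma distortion_uniform01_ge:
  assumes "finite A" "A \<noteq> {}" "card A \<le> n"
  shows "1 / (32 * real n ^ 2) \<le> distortion uniform01 A"
proof -
  interpret prob_space uniform01 by (rule prob_space_uniform01)
  define r where "r = 1 / (4 * real n)"
  have "0 < n" using assms card_gt_0_iff by fastforce
  then have r: "0 < r" by (simp add: r_def)
  define far where "far = {x \<in> space uniform01. r^2 \<le> sq_dist_to A x}"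
  have far_sets: "far \<in> sets uniform01"
    unfolding far_def using assms by measurable
  have "space uniform01 - far \<subseteq> (\<Union>a\<in>A. {a - r<..<a + r})"
  proof
    fix x assume "x \<in> space uniform01 - far"
    then obtain a where "a \<in> A" "\<bar>x - a\<bar> < r"
      using sq_dist_to_less_iff[OF assms(1,2) r] by (auto simp: far_def not_le)
    then show "x \<in> (\<Union>a\<in>A. {a - r<..<a + r})"
      by (auto simp: abs_less_iff intro!: bexI[of _ a])
  qed
  then have "measure uniform01 (space uniform01 - far)
      \<le> measure uniform01 (\<Union>a\<in>A. {a - r<..<a + r})"
    using assms by (intro finite_measure_mono) auto
  also have "\<dots> \<le> (\<Sum>a\<in>A. measure uniform01 {a - r<..<a + r})"
    using assms by (intro finite_measure_subadditive_finite) auto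
  also have "\<dots> \<le> card A * (2 * r)"
    using sum_mono[of A _ "\<lambda>_. 2 * r"] measure_uniform01_interval_le[OF r] by simp
  also have "\<dots> \<le> 1 / 2"
    using assms \<open>0 < n\<close> r by (simp add: r_def field_simps)
  finally have "1 / 2 \<le> measure uniform01 far"
    using prob_compl[OF far_sets] by simp
  also have "\<dots> \<le> distortion uniform01 A / r^2"
    unfolding far_def distortion_def using assms r
    by (intro integral_Markov_inequality_measure[where A = "{}"])
       (auto simp: integrable_sq_dist_to_uniform01 sq_dist_to_nonneg)
  finally show ?thesis using r by (simp add: r_def field_simps power2_eq_square)
qed

definition midpoint_grid :: "nat \<Rightarrow> real set" where
  "midpoint_grid m = (\<lambda>k. (2 * real k + 1) / (2 * real m)) ` {..<m}"

lemma finite_midpoint_grid: "finite (midpoint_grid m)"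
  by (simp add: midpoint_grid_def)

lemma card_midpoint_grid_le: "card (midpoint_grid m) \<le> m"
  unfolding midpoint_grid_def using card_image_le[of "{..<m}"] by simp

lemma midpoint_grid_near:
  assumes "0 < m" "x \<in> {0..1}"
  shows "\<exists>g\<in>midpoint_grid m. \<bar>x - g\<bar> \<le> 1 / (2 * real m)"
proof -
  define k where "k = min (nat \<lfloor>x * m\<rfloor>) (m - 1)"
  have xm: "0 \<le> x * m" "x * m \<le> m"
    using assms by (auto simp: mult_left_le_one_le)
  have "k < m" using assms by (simp add: k_def)
  have "real k \<le> x * m" "x * m \<le> real k + 1"
    using xm assms unfolding k_def by (auto simp: min_def of_nat_diff) linarith+
  then have "\<bar>2 * (x * m) - 2 * real k - 1\<bar> \<le> 1" by simp
  then have "\<bar>x - (2 * real k + 1) / (2 * real m)\<bar> \<le> 1 / (2 * real m)"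
    using assms by (simp add: field_simps abs_div flip: abs_of_pos)
  then show ?thesis using \<open>k < m\<close> by (auto simp: midpoint_grid_def)
qed

lemma distortion_uniform01_le:
  assumes "finite A" "midpoint_grid m \<subseteq> A" "0 < m"
  shows "distortion uniform01 A \<le> 1 / (4 * real m ^ 2)"
proof -
  interpret prob_space uniform01 by (rule prob_space_uniform01)
  have "A \<noteq> {}" using assms by (auto simp: midpoint_grid_def)
  have "sq_dist_to A x \<le> 1 / (4 * real m ^ 2)" if x: "x \<in> {0..1}" for x
  proof -
    obtain g where "g \<in> A" "\<bar>x - g\<bar> \<le> 1 / (2 * real m)"
      using midpoint_grid_near[OF assms(3) x] assms(2) by blast
    then have "sq_dist_to A x \<le> \<bar>x - g\<bar>^2" using assms(1) by (simp add: sq_dist_to_le)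
    also have "\<dots> \<le> (1 / (2 * real m))^2"
      by (intro power_mono) (use \<open>\<bar>x - g\<bar> \<le> _\<close> in auto)
    finally show ?thesis by (simp add: power2_eq_square)
  qed
  then have "distortion uniform01 A \<le> (\<integral>x. 1 / (4 * real m ^ 2) \<partial>uniform01)"
    unfolding distortion_def using assms(1) \<open>A \<noteq> {}\<close>
    by (intro integral_mono_AE integrable_sq_dist_to_uniform01)
       (auto simp: AE_uniform_measure intro!: AE_I2)
  then show ?thesis by simp
qed

lemma cond_quant_err_uniform01_ge:
  assumes "finite \<beta>" "\<beta> \<noteq> {}" "card \<beta> \<le> n"
  shows "1 / (32 * real n ^ 2) \<le> cond_quant_err uniform01 \<beta> n"
proof (rule le_cond_quant_err)
  fix \<alpha> :: "real set" assume "finite \<alpha>" "card \<alpha> \<le> n - card \<beta>"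
  moreover have "card (\<alpha> \<union> \<beta>) \<le> card \<alpha> + card \<beta>" by (rule card_Un_le)
  ultimately show "1 / (32 * real n ^ 2) \<le> distortion uniform01 (\<alpha> \<union> \<beta>)"
    using assms by (intro distortion_uniform01_ge) auto
qed

lemma cond_quant_err_uniform01_le:
  assumes "finite \<beta>" "\<beta> \<noteq> {}" "card \<beta> < n"
  shows "cond_quant_err uniform01 \<beta> n \<le> 1 / (4 * (real n - card \<beta>)^2)"
proof -
  have "cond_quant_err uniform01 \<beta> n \<le> distortion uniform01 (midpoint_grid (n - card \<beta>) \<union> \<beta>)"
    using assms by (intro cond_quant_err_le_distortion finite_midpoint_grid card_midpoint_grid_le)
  also have "\<dots> \<le> 1 / (4 * real (n - card \<beta>) ^ 2)"
    using assms by (intro distortion_uniform01_le) (auto simp: finite_midpoint_grid)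
  finally show ?thesis using assms by (simp add: of_nat_diff)
qed

lemma tendsto_log_ratio_of_inverse_square_bounds:
  fixes V :: "nat \<Rightarrow> real"
  assumes "0 < a" "0 < b"
    and lower: "eventually (\<lambda>n. a / real n ^ 2 \<le> V n) sequentially"
    and upper: "eventually (\<lambda>n. V n \<le> b / real n ^ 2) sequentially"
  shows "V \<longlonglongrightarrow> 0" and "(\<lambda>n. 2 * ln (real n) / (- ln (V n))) \<longlonglongrightarrow> 1"
proof -
  show "V \<longlonglongrightarrow> 0"
    by (rule tendsto_sandwich[OF lower upper]) real_asymp+
  have pos: "eventually (\<lambda>n. 0 < 2 * ln (real n) - ln b) sequentially" by real_asymp
  have "eventually (\<lambda>n. 0 < n) sequentially" by real_asymp
  with lower upper pos
  have "eventually (\<lambda>n.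
      2 * ln (real n) / (2 * ln (real n) - ln a) \<le> 2 * ln (real n) / (- ln (V n)) \<and>
      2 * ln (real n) / (- ln (V n)) \<le> 2 * ln (real n) / (2 * ln (real n) - ln b)) sequentially"
  proof eventually_elim
    case (elim n)
    have "0 < a / real n ^ 2" using elim \<open>0 < a\<close> by simp
    then have "0 < V n" using elim by linarith
    have "ln (a / real n ^ 2) \<le> ln (V n)" "ln (V n) \<le> ln (b / real n ^ 2)"
      using elim \<open>0 < V n\<close> assms(1,2) by (subst ln_le_cancel_iff; simp)+
    then have "2 * ln (real n) - ln b \<le> - ln (V n)" "- ln (V n) \<le> 2 * ln (real n) - ln a"
      using elim assms(1,2) by (simp_all add: ln_div ln_realpow)
    moreover have "0 \<le> 2 * ln (real n)" using elim by simp
    ultimately show ?case using elim by (intro conjI frac_le; linarith)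
  qed
  then have lower_ratio: "eventually (\<lambda>n.
      2 * ln (real n) / (2 * ln (real n) - ln a) \<le> 2 * ln (real n) / (- ln (V n))) sequentially"
    and upper_ratio: "eventually (\<lambda>n.
      2 * ln (real n) / (- ln (V n)) \<le> 2 * ln (real n) / (2 * ln (real n) - ln b)) sequentially"
    by (auto elim: eventually_mono)
  have shifted: "(\<lambda>n. 2 * ln (real n) / (2 * ln (real n) - c)) \<longlonglongrightarrow> 1" for c :: real
    by real_asymp
  show "(\<lambda>n. 2 * ln (real n) / (- ln (V n))) \<longlonglongrightarrow> 1"
    using lower_ratio upper_ratio shifted shifted by (rule tendsto_sandwich)
qed

theorem cond_quant_dimension_uniform01:
  fixes \<beta> :: "real set"
  assumes "finite \<beta>" "\<beta> \<noteq> {}"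
  shows "cond_quant_err uniform01 \<beta> \<longlonglongrightarrow> 0"
    and "(\<lambda>n. 2 * ln (real n) / (- ln (cond_quant_err uniform01 \<beta> n))) \<longlonglongrightarrow> 1"
proof -
  let ?k = "real (card \<beta>)"
  have "eventually (\<lambda>n. (1 / 32) / real n ^ 2 \<le> cond_quant_err uniform01 \<beta> n) sequentially"
    using eventually_ge_at_top[of "card \<beta>"]
    by eventually_elim (use cond_quant_err_uniform01_ge[OF assms] in simp)
  moreover have "eventually (\<lambda>n. cond_quant_err uniform01 \<beta> n \<le> 1 / real n ^ 2) sequentially"
    using eventually_ge_at_top[of "2 * card \<beta> + 1"]
  proof eventually_elim
    case (elim n)
    have "2 * ?k + 1 \<le> real n" using elim by linarith
    then have "real n * real n \<le> (2 * (real n - ?k)) * (2 * (real n - ?k))"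
      by (auto intro!: mult_mono)
    then have "real n ^ 2 \<le> 4 * (real n - ?k)^2"
      by (simp add: power2_eq_square algebra_simps)
    with elim have "1 / (4 * (real n - ?k)^2) \<le> 1 / real n ^ 2"
      by (auto intro!: divide_left_mono)
    moreover have "cond_quant_err uniform01 \<beta> n \<le> 1 / (4 * (real n - ?k)^2)"
      using elim by (intro cond_quant_err_uniform01_le[OF assms]) auto
    ultimately show ?case by linarith
  qed
  ultimately show "cond_quant_err uniform01 \<beta> \<longlonglongrightarrow> 0"
    and "(\<lambda>n. 2 * ln (real n) / (- ln (cond_quant_err uniform01 \<beta> n))) \<longlonglongrightarrow> 1"
    using tendsto_log_ratio_of_inverse_square_bounds[of "1 / 32" 1] by auto
qed

theorem theorem3p11:
  fixes V :: "nat \<Rightarrow> real" and Vinf :: real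
  defines "V \<equiv> cond_quant_err (uniform_measure lborel {0..1}) {1/4, 1/2}"
    and "Vinf \<equiv> lim V"
  shows "convergent V \<and>
         ((\<lambda>n. 2 * ln (real n) / (- ln (V n - Vinf))) \<longlongrightarrow> 1) sequentially"
proof -
  have "finite {1/4, 1/2 :: real}" "{1/4, 1/2 :: real} \<noteq> {}" by auto
  note dimension = cond_quant_dimension_uniform01[OF this, folded V_def]
  then have "Vinf = 0" unfolding Vinf_def by (intro limI)
  with dimension show ?thesis by (auto simp: convergent_def)
qed

end
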